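(* Let $\vec v\in\mathcal{S}^{n-1}$ and let $f\in\mathcal{L}^{1}(\mathbb{R}^{n})$ satisfy $t_{\min}:=\inf_{\vec x\in\mathrm{supp}\,f}\vec x\cdot\vec v>-\infty$. Then the distributional directional antiderivative $\mathcal{I}_{\vec v}f$ is the function given by \[ \mathcal{I}_{\vec v}f(\vec u+s\vec v)=\int_{-\infty}^{s}f(\vec u+t\vec v)\,dt,\qquad \vec u\in\vec v^{\perp},\ s\in\mathbb{R}, \] i.e. $\langle \mathcal{I}_{\vec v}f,\phi\rangle=\int_{\vec v^\perp}\int_{\mathbb{R}}\Big(\int_{-\infty}^{s}f(\vec u+t\vec v)\,dt\Big)\phi(\vec u+s\vec v)\,ds\,d\vec u$ for all $\phi\in\mathscr{S}(\mathbb{R}^n)$.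
   Context: For $\vec v\in\mathcal{S}^{n-1}$ and $\phi\in\mathscr{S}(\mathbb{R}^n)$, the x-ray transform in direction $\vec v$ is $\mathcal{X}_{\vec v}\phi(\vec u)=\int_{\mathbb{R}}\phi(\vec u+s\vec v)\,ds$ for $\vec u\in\vec v^\perp$. For a distribution $w$ with $t_{\min}=\inf_{\vec x\in\mathrm{supp}\,w}\vec x\cdot\vec v>-\infty$, choose $\psi_0\in\mathcal{C}_0^\infty(\mathbb{R})$ with $\int_{\mathbb{R}}\psi_0=1$ and $\mathrm{supp}\,\psi_0\subseteq(-\infty,t_{\min})$, and set \[ \mathcal{I}_{\vec v}\phi(\vec u+t\vec v)=\int_{-\infty}^{t}\big(\phi(\vec u+s\vec v)-\mathcal{X}_{\vec v}\phi(\vec u)\psi_0(s)\big)\,ds,\quad \vec u\in\vec v^\perp,\ t\in\mathbb{R}. \] The distributional directional antiderivative is defined by $\langle\mathcal{I}_{\vec v}w,\phi\rangle=-\langle w,\mathcal{I}_{\vec v}\phi\rangle$ for $\phi\in\mathscr{S}(\mathbb{R}^n)$; this does not depend on the choice of $\psi_0$. Here the support of $f\in\mathcal{L}^1$ is its essential support. *)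

theory Defs
  imports "HOL-Analysis.Analysis"
begin

fun dirderivs :: "'a::real_normed_vector list \<Rightarrow> ('a \<Rightarrow> 'b::real_normed_vector) \<Rightarrow> 'a \<Rightarrow> 'b" where
  "dirderivs [] g = g"
| "dirderivs (e # es) g = (\<lambda>x. frechet_derivative (dirderivs es g) (at x) e)"

definition smooth_fun :: "('a::real_normed_vector \<Rightarrow> 'b::real_normed_vector) \<Rightarrow> bool" where
  "smooth_fun g \<longleftrightarrow> (\<forall>ds x. dirderivs ds g differentiable (at x))"

definition schwartz :: "('a::euclidean_space \<Rightarrow> complex) \<Rightarrow> bool" where
  "schwartz \<phi> \<longleftrightarrow> smooth_fun \<phi> \<and>
     (\<forall>ds (k::nat). bounded ((\<lambda>x. (1 + norm x) ^ k * norm (dirderivs ds \<phi> x)) ` UNIV))"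

definition esssupp :: "('a::euclidean_space \<Rightarrow> complex) \<Rightarrow> 'a set" where
  "esssupp f = - \<Union>{U. open U \<and> (AE x in lborel. x \<in> U \<longrightarrow> f x = 0)}"

definition tmin :: "'a::euclidean_space \<Rightarrow> ('a \<Rightarrow> complex) \<Rightarrow> ereal" where
  "tmin v f = Inf ((\<lambda>x. ereal (x \<bullet> v)) ` esssupp f)"

text \<open>x-ray transform in direction v (evaluated at u, meant for u in the orthogonal complement of v).\<close>
definition xray :: "'a::euclidean_space \<Rightarrow> ('a \<Rightarrow> complex) \<Rightarrow> 'a \<Rightarrow> complex" where
  "xray v \<phi> u = (LINT s|lborel. \<phi> (u + s *\<^sub>R v))"

text \<open>Decomposition x = u + t v with u = x - (x.v) v in the orthogonal complement and t = x.v.\<close>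
definition perp_part :: "'a::euclidean_space \<Rightarrow> 'a \<Rightarrow> 'a" where
  "perp_part v x = x - (x \<bullet> v) *\<^sub>R v"

definition antideriv_test ::
  "'a::euclidean_space \<Rightarrow> (real \<Rightarrow> complex) \<Rightarrow> ('a \<Rightarrow> complex) \<Rightarrow> 'a \<Rightarrow> complex" where
  "antideriv_test v \<psi>0 \<phi> x =
     (LINT s:{..x \<bullet> v}|lborel. \<phi> (perp_part v x + s *\<^sub>R v) - xray v \<phi> (perp_part v x) * \<psi>0 s)"

definition admissible_cutoff :: "'a::euclidean_space \<Rightarrow> ('a \<Rightarrow> complex) \<Rightarrow> (real \<Rightarrow> complex) \<Rightarrow> bool" where
  "admissible_cutoff v f \<psi>0 \<longleftrightarrow> smooth_fun \<psi>0 \<and> bounded {s. \<psi>0 s \<noteq> 0} \<and>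
     (LINT s|lborel. \<psi>0 s) = 1 \<and>
     closure {s. \<psi>0 s \<noteq> 0} \<subseteq> {s. ereal s < tmin v f}"

definition fun_pairing :: "('a::euclidean_space \<Rightarrow> complex) \<Rightarrow> ('a \<Rightarrow> complex) \<Rightarrow> complex" where
  "fun_pairing f \<phi> = (LINT x|lborel. f x * \<phi> x)"

definition dist_antideriv ::
  "'a::euclidean_space \<Rightarrow> (real \<Rightarrow> complex) \<Rightarrow> (('a \<Rightarrow> complex) \<Rightarrow> complex) \<Rightarrow> ('a \<Rightarrow> complex) \<Rightarrow> complex" where
  "dist_antideriv v \<psi>0 w \<phi> = - w (antideriv_test v \<psi>0 \<phi>)"

definition pointwise_antideriv :: "'a::euclidean_space \<Rightarrow> ('a \<Rightarrow> complex) \<Rightarrow> 'a \<Rightarrow> complex" where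
  "pointwise_antideriv v f x = (LINT t:{..x \<bullet> v}|lborel. f (perp_part v x + t *\<^sub>R v))"

end

theory Submission
  imports Defs "HOL-Probability.Sinc_Integral"
begin

text \<open>Write \<open>x = u + t v\<close> with \<open>u \<bottom> v\<close>. Almost everywhere on the set where \<open>f \<noteq> 0\<close> we
  have \<open>t \<ge> tmin\<close>, so the cut-off \<open>\<psi>0\<close> vanishes on \<open>[t, \<infinity>)\<close>; there the integral of
  \<open>\<phi> - X\<phi> \<psi>0\<close> over \<open>(-\<infinity>, t]\<close> equals minus the tail \<open>\<integral>\<^sub>r\<^sub>>\<^sub>0 \<phi>(x + r v) dr\<close>.
  Hence the pairing becomes \<open>\<integral> f(x) \<integral>\<^sub>r\<^sub>>\<^sub>0 \<phi>(x + r v) dr dx\<close>, and Fubini together with the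
  translation \<open>y = x + r v\<close> turns it into \<open>\<integral> (\<integral>\<^sub>r\<^sub>>\<^sub>0 f(y - r v) dr) \<phi>(y) dy\<close>.
  Absolute integrability comes from the decay \<open>|\<phi> x| \<le> B / (1 + |x|\<^sup>2)\<close>, which bounds every
  line integral of \<open>|\<phi>|\<close> by \<open>B \<pi>\<close>.\<close>

lemma lborel_integrable_inverse_1_plus_square:
  "integrable lborel (\<lambda>t::real. inverse (1 + t\<^sup>2))"
  using integrable_inverse_1_plus_square by (simp add: set_integrable_def einterval_def)

lemma lborel_integral_inverse_1_plus_square:
  "(\<integral>t. inverse (1 + t\<^sup>2) \<partial>lborel) = pi"
  using LBINT_inverse_1_plus_square
  by (simp add: interval_lebesgue_integral_def set_lebesgue_integral_def einterval_def)

lemma borel_measurable_lborel_integrable: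
  fixes f :: "'a::euclidean_space \<Rightarrow> 'b::{banach,second_countable_topology}"
  shows "integrable lborel f \<Longrightarrow> f \<in> borel_measurable borel"
  using borel_measurable_integrable by simp

lemma lborel_integral_translate:
  fixes h :: "'a::euclidean_space \<Rightarrow> 'b::{banach,second_countable_topology}"
  assumes [measurable]: "h \<in> borel_measurable borel"
  shows "(\<integral>y. h y \<partial>lborel) = (\<integral>x. h (c + x) \<partial>lborel)"
proof -
  have "(\<integral>y. h y \<partial>lborel) = (\<integral>y. h y \<partial>distr lborel borel ((+) c))"
    by (simp add: lborel_distr_plus)
  also have "\<dots> = (\<integral>x. h (c + x) \<partial>lborel)"
    by (rule integral_distr) auto
  finally show ?thesis .
qed

lemma lborel_integrable_translate:
  fixes h :: "'a::euclidean_space \<Rightarrow> 'b::{banach,second_countable_topology}"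
  assumes [measurable]: "h \<in> borel_measurable borel" and "integrable lborel h"
  shows "integrable lborel (\<lambda>x. h (c + x))"
proof -
  have "integrable (distr lborel borel ((+) c)) h"
    using assms(2) by (simp add: lborel_distr_plus)
  then show ?thesis
    by (subst (asm) integrable_distr_eq) auto
qed

lemma schwartz_continuous:
  assumes "schwartz \<phi>"
  shows "continuous_on UNIV \<phi>"
proof -
  have "\<phi> differentiable (at x)" for x
    using assms unfolding schwartz_def smooth_fun_def by (metis dirderivs.simps(1))
  then show ?thesis
    by (meson continuous_at_imp_continuous_on differentiable_imp_continuous_within)
qed

lemma schwartz_decay:
  assumes "schwartz \<phi>"
  obtains B where "0 \<le> B" "\<And>x. norm (\<phi> x) \<le> B / (1 + (norm x)\<^sup>2)"
proof -
  have "bounded (range (\<lambda>x. (1 + norm x) ^ 2 * norm (dirderivs [] \<phi> x)))"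
    using assms unfolding schwartz_def by blast
  then obtain B where B: "\<And>x. (1 + norm x) ^ 2 * norm (\<phi> x) \<le> B"
    unfolding bounded_iff by fastforce
  have "norm (\<phi> x) \<le> B / (1 + (norm x)\<^sup>2)" for x
  proof -
    have "(1 + (norm x)\<^sup>2) * norm (\<phi> x) \<le> (1 + norm x) ^ 2 * norm (\<phi> x)"
      by (intro mult_right_mono) (auto simp: power2_eq_square algebra_simps)
    with B[of x] show ?thesis
      by (simp add: field_simps add_pos_nonneg)
  qed
  moreover have "0 \<le> B"
    using order_trans[OF norm_ge_zero, of "\<phi> 0" B] B[of 0] by simp
  ultimately show thesis using that by blast
qed

context
  fixes \<phi> :: "'a::euclidean_space \<Rightarrow> 'b::{banach,second_countable_topology}" and v :: 'a and B :: real
  assumes unit: "norm v = 1"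
    and \<phi>_meas [measurable]: "\<phi> \<in> borel_measurable borel"
    and B_nonneg: "0 \<le> B"
    and decay: "\<And>y. norm (\<phi> y) \<le> B / (1 + (norm y)\<^sup>2)"
begin

lemma norm_le_decay_const: "norm (\<phi> y) \<le> B"
proof -
  have "B / (1 + (norm y)\<^sup>2) \<le> B / 1"
    using B_nonneg by (intro divide_left_mono) (auto simp: add_pos_nonneg)
  then show ?thesis
    using decay[of y] by simp
qed

lemma decay_along_line: "norm (\<phi> (x + r *\<^sub>R v)) \<le> B * inverse (1 + (x \<bullet> v + r)\<^sup>2)"
proof -
  have "(x + r *\<^sub>R v) \<bullet> v = x \<bullet> v + r"
    using unit by (simp add: inner_add_left dot_square_norm)
  then have "\<bar>x \<bullet> v + r\<bar> \<le> norm (x + r *\<^sub>R v)"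
    using Cauchy_Schwarz_ineq2[of "x + r *\<^sub>R v" v] unit by simp
  then have "(x \<bullet> v + r)\<^sup>2 \<le> (norm (x + r *\<^sub>R v))\<^sup>2"
    by (metis abs_le_square_iff abs_norm_cancel)
  then have "B / (1 + (norm (x + r *\<^sub>R v))\<^sup>2) \<le> B / (1 + (x \<bullet> v + r)\<^sup>2)"
    using B_nonneg by (intro divide_left_mono) (auto simp: add_pos_nonneg)
  then show ?thesis
    using decay[of "x + r *\<^sub>R v"] by (simp add: divide_inverse)
qed

lemma integrable_dominating_along_line:
  "integrable lborel (\<lambda>r. B * inverse (1 + (x \<bullet> v + r)\<^sup>2))"
  using lborel_integrable_real_affine[OF lborel_integrable_inverse_1_plus_square, of 1 "x \<bullet> v"]
  by simp

lemma integrable_along_line: "integrable lborel (\<lambda>r. \<phi> (x + r *\<^sub>R v))"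
  by (rule Bochner_Integration.integrable_bound[OF integrable_dominating_along_line])
     (auto intro: order_trans[OF decay_along_line] simp: B_nonneg)

lemma integral_norm_along_line_le: "(\<integral>r. norm (\<phi> (x + r *\<^sub>R v)) \<partial>lborel) \<le> B * pi"
proof -
  have "(\<integral>r. norm (\<phi> (x + r *\<^sub>R v)) \<partial>lborel) \<le> (\<integral>r. B * inverse (1 + (x \<bullet> v + r)\<^sup>2) \<partial>lborel)"
    by (intro integral_mono integrable_dominating_along_line integrable_norm integrable_along_line
          decay_along_line)
  also have "\<dots> = B * pi"
    using lborel_integral_real_affine[of 1 "\<lambda>t. inverse (1 + t\<^sup>2)" "x \<bullet> v"]
    by (simp add: lborel_integral_inverse_1_plus_square)
  finally show ?thesis .
qed

end

context
  fixes f \<phi> :: "'a::euclidean_space \<Rightarrow> complex" and v :: 'a and C K :: real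
  assumes f_int: "integrable lborel f"
    and \<phi>_meas [measurable]: "\<phi> \<in> borel_measurable borel"
    and \<phi>_bounded: "\<And>y. norm (\<phi> y) \<le> C"
    and line_int: "\<And>x. integrable lborel (\<lambda>r. \<phi> (x + r *\<^sub>R v))"
    and line_norm: "\<And>x. (\<integral>r. norm (\<phi> (x + r *\<^sub>R v)) \<partial>lborel) \<le> K"
begin

lemma integrable_forward_half_line:
  "integrable (lborel \<Otimes>\<^sub>M lborel) (\<lambda>(x, r). indicator {0<..} r *\<^sub>R (f x * \<phi> (x + r *\<^sub>R v)))"
proof (rule lborel_pair.Fubini_integrable)
  note f_meas [measurable] = borel_measurable_lborel_integrable[OF f_int]
  have bound: "norm (\<integral>r. norm (indicator {0<..} r *\<^sub>R (f x * \<phi> (x + r *\<^sub>R v))) \<partial>lborel)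
      \<le> norm (K * norm (f x))" for x
  proof -
    have "(\<integral>r. norm (indicator {0<..} r *\<^sub>R (f x * \<phi> (x + r *\<^sub>R v))) \<partial>lborel)
        \<le> (\<integral>r. norm (f x) * norm (\<phi> (x + r *\<^sub>R v)) \<partial>lborel)"
      by (intro integral_mono integrable_norm integrable_mult_right integrable_mult_indicator line_int)
         (auto simp: indicator_def norm_mult)
    also have "\<dots> \<le> K * norm (f x)"
      unfolding integral_mult_right_zero mult.commute[of K] by (intro mult_left_mono line_norm norm_ge_zero)
    also have "\<dots> \<le> norm (K * norm (f x))"
      unfolding real_norm_def by (rule abs_ge_self)
    finally show ?thesis
      by simp
  qed
  show "integrable lborel (\<lambda>x. \<integral>r. norm (case (x, r) of (x, r) \<Rightarrow>
      indicator {0<..} r *\<^sub>R (f x * \<phi> (x + r *\<^sub>R v))) \<partial>lborel)"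
    by (rule Bochner_Integration.integrable_bound[of _ "\<lambda>x. K * norm (f x)"])
       (use f_int bound in auto)
  show "AE x in lborel. integrable lborel (\<lambda>r. case (x, r) of (x, r) \<Rightarrow>
      indicator {0<..} r *\<^sub>R (f x * \<phi> (x + r *\<^sub>R v)))"
    by (auto intro!: integrable_mult_indicator line_int)
  show "(\<lambda>(x, r). indicator {0<..} r *\<^sub>R (f x * \<phi> (x + r *\<^sub>R v))) \<in> borel_measurable (lborel \<Otimes>\<^sub>M lborel)"
    by measurable
qed

lemma integrable_backward_half_line:
  "integrable (lborel \<Otimes>\<^sub>M lborel) (\<lambda>(r, y). indicator {0<..} r *\<^sub>R (f (y - r *\<^sub>R v) * \<phi> y))"
proof (rule lborel_pair.Fubini_integrable)
  note f_meas [measurable] = borel_measurable_lborel_integrable[OF f_int]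
  have norm_int: "integrable (lborel \<Otimes>\<^sub>M lborel)
      (\<lambda>(x, r). norm (indicator {0<..} r *\<^sub>R (f x * \<phi> (x + r *\<^sub>R v))))"
    using integrable_norm[OF integrable_forward_half_line] by (simp add: case_prod_beta')
  have shift: "(\<integral>y. norm (indicator {0<..} r *\<^sub>R (f (y - r *\<^sub>R v) * \<phi> y)) \<partial>lborel)
      = (\<integral>x. norm (indicator {0<..} r *\<^sub>R (f x * \<phi> (x + r *\<^sub>R v))) \<partial>lborel)" for r
    using lborel_integral_translate[of "\<lambda>y. norm (indicator {0<..} r *\<^sub>R (f (y - r *\<^sub>R v) * \<phi> y))"
        "r *\<^sub>R v"]
    by (simp add: add.commute)
  show "integrable lborel (\<lambda>r. \<integral>y. norm (case (r, y) of (r, y) \<Rightarrow>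
      indicator {0<..} r *\<^sub>R (f (y - r *\<^sub>R v) * \<phi> y)) \<partial>lborel)"
    unfolding prod.case shift by (rule lborel_pair.integrable_snd[OF norm_int])
  show "AE r in lborel. integrable lborel (\<lambda>y. case (r, y) of (r, y) \<Rightarrow>
      indicator {0<..} r *\<^sub>R (f (y - r *\<^sub>R v) * \<phi> y))"
  proof (rule AE_I2)
    fix r :: real
    have "integrable lborel (\<lambda>y. f (y - r *\<^sub>R v))"
      using lborel_integrable_translate[OF f_meas f_int, of "- (r *\<^sub>R v)"] by simp
    then have dominant: "integrable lborel (\<lambda>y. C * norm (f (y - r *\<^sub>R v)))"
      by (intro integrable_mult_right integrable_norm)
    have "norm (f (y - r *\<^sub>R v) * \<phi> y) \<le> norm (C * norm (f (y - r *\<^sub>R v)))" for y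
    proof -
      have "norm (f (y - r *\<^sub>R v) * \<phi> y) \<le> C * norm (f (y - r *\<^sub>R v))"
        unfolding norm_mult mult.commute[of C] by (intro mult_left_mono \<phi>_bounded norm_ge_zero)
      also have "\<dots> \<le> norm (C * norm (f (y - r *\<^sub>R v)))"
        unfolding real_norm_def by (rule abs_ge_self)
      finally show ?thesis .
    qed
    then have "integrable lborel (\<lambda>y. f (y - r *\<^sub>R v) * \<phi> y)"
      by (intro Bochner_Integration.integrable_bound[OF dominant] AE_I2) measurable
    then show "integrable lborel (\<lambda>y. case (r, y) of (r, y) \<Rightarrow>
        indicator {0<..} r *\<^sub>R (f (y - r *\<^sub>R v) * \<phi> y))"
      by (simp add: integrable_mult_indicator)
  qed
  show "(\<lambda>(r, y). indicator {0<..} r *\<^sub>R (f (y - r *\<^sub>R v) * \<phi> y)) \<in> borel_measurable (lborel \<Otimes>\<^sub>M lborel)"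
    by measurable
qed

lemma half_line_integral_adjoint:
  "(\<integral>x. f x * (LINT r:{0<..}|lborel. \<phi> (x + r *\<^sub>R v)) \<partial>lborel)
     = (\<integral>y. (LINT r:{0<..}|lborel. f (y - r *\<^sub>R v)) * \<phi> y \<partial>lborel)"
proof -
  note f_meas [measurable] = borel_measurable_lborel_integrable[OF f_int]
  have shift: "(\<integral>y. indicator {0<..} r *\<^sub>R (f (y - r *\<^sub>R v) * \<phi> y) \<partial>lborel)
      = (\<integral>x. indicator {0<..} r *\<^sub>R (f x * \<phi> (x + r *\<^sub>R v)) \<partial>lborel)" for r
    using lborel_integral_translate[of "\<lambda>y. indicator {0<..} r *\<^sub>R (f (y - r *\<^sub>R v) * \<phi> y)"
        "r *\<^sub>R v"]
    by (simp add: add.commute)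
  have "(\<integral>x. f x * (LINT r:{0<..}|lborel. \<phi> (x + r *\<^sub>R v)) \<partial>lborel)
      = (\<integral>x. \<integral>r. indicator {0<..} r *\<^sub>R (f x * \<phi> (x + r *\<^sub>R v)) \<partial>lborel \<partial>lborel)"
  proof (intro Bochner_Integration.integral_cong refl)
    fix x
    have "(\<integral>r. indicator {0<..} r *\<^sub>R (f x * \<phi> (x + r *\<^sub>R v)) \<partial>lborel)
        = (\<integral>r. f x * (indicator {0<..} r *\<^sub>R \<phi> (x + r *\<^sub>R v)) \<partial>lborel)"
      by (simp only: mult_scaleR_right)
    then show "f x * (LINT r:{0<..}|lborel. \<phi> (x + r *\<^sub>R v))
        = (\<integral>r. indicator {0<..} r *\<^sub>R (f x * \<phi> (x + r *\<^sub>R v)) \<partial>lborel)"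
      by (simp only: integral_mult_right_zero set_lebesgue_integral_def)
  qed
  also have "\<dots> = (\<integral>r. \<integral>x. indicator {0<..} r *\<^sub>R (f x * \<phi> (x + r *\<^sub>R v)) \<partial>lborel \<partial>lborel)"
    using lborel_pair.Fubini_integral[OF integrable_forward_half_line] by simp
  also have "\<dots> = (\<integral>r. \<integral>y. indicator {0<..} r *\<^sub>R (f (y - r *\<^sub>R v) * \<phi> y) \<partial>lborel \<partial>lborel)"
    by (simp only: shift)
  also have "\<dots> = (\<integral>y. \<integral>r. indicator {0<..} r *\<^sub>R (f (y - r *\<^sub>R v) * \<phi> y) \<partial>lborel \<partial>lborel)"
    using lborel_pair.Fubini_integral[OF integrable_backward_half_line] by simp
  also have "\<dots> = (\<integral>y. (LINT r:{0<..}|lborel. f (y - r *\<^sub>R v)) * \<phi> y \<partial>lborel)"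
  proof (intro Bochner_Integration.integral_cong refl)
    fix y
    have "(\<integral>r. indicator {0<..} r *\<^sub>R (f (y - r *\<^sub>R v) * \<phi> y) \<partial>lborel)
        = (\<integral>r. (indicator {0<..} r *\<^sub>R f (y - r *\<^sub>R v)) * \<phi> y \<partial>lborel)"
      by (simp only: mult_scaleR_left)
    then show "(\<integral>r. indicator {0<..} r *\<^sub>R (f (y - r *\<^sub>R v) * \<phi> y) \<partial>lborel)
        = (LINT r:{0<..}|lborel. f (y - r *\<^sub>R v)) * \<phi> y"
      by (simp only: integral_mult_left_zero set_lebesgue_integral_def)
  qed
  finally show ?thesis .
qed

end

text \<open>Lindelof's theorem makes the union defining the essential support countable.\<close>

lemma AE_nonzero_in_esssupp: "AE x in lborel. f x \<noteq> 0 \<longrightarrow> x \<in> esssupp f"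
proof -
  let ?Z = "{U. open U \<and> (AE x in lborel. x \<in> U \<longrightarrow> f x = 0)}"
  obtain Z' where Z': "Z' \<subseteq> ?Z" "countable Z'" "\<Union>Z' = \<Union>?Z"
    using Lindelof[of ?Z] by auto
  have "\<forall>U\<in>Z'. AE x in lborel. x \<in> U \<longrightarrow> f x = 0"
    using Z'(1) by blast
  then have "AE x in lborel. \<forall>U\<in>Z'. x \<in> U \<longrightarrow> f x = 0"
    by (subst AE_ball_countable[OF Z'(2)])
  then show ?thesis
  proof eventually_elim
    case (elim x)
    then show ?case
      unfolding esssupp_def Z'(3)[symmetric] by blast
  qed
qed

lemma admissible_cutoff_integral: "admissible_cutoff v f \<psi>0 \<Longrightarrow> (\<integral>s. \<psi>0 s \<partial>lborel) = 1"
  by (simp add: admissible_cutoff_def)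

lemma admissible_cutoff_continuous:
  assumes "admissible_cutoff v f \<psi>0"
  shows "continuous_on UNIV \<psi>0"
proof -
  have "\<psi>0 differentiable (at s)" for s
    using assms unfolding admissible_cutoff_def smooth_fun_def by (metis dirderivs.simps(1))
  then show ?thesis
    by (meson continuous_at_imp_continuous_on differentiable_imp_continuous_within)
qed

lemma admissible_cutoff_vanishes:
  assumes "admissible_cutoff v f \<psi>0" and "tmin v f \<le> ereal s"
  shows "\<psi>0 s = 0"
proof -
  have "closure {s. \<psi>0 s \<noteq> 0} \<subseteq> {s. ereal s < tmin v f}"
    using assms(1) unfolding admissible_cutoff_def by blast
  moreover have "s \<notin> {s. ereal s < tmin v f}"
    using leD[OF assms(2)] by blast
  ultimately have "s \<notin> closure {s. \<psi>0 s \<noteq> 0}"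
    by blast
  then show ?thesis
    using closure_subset[of "{s. \<psi>0 s \<noteq> 0}"] by blast
qed

lemma antideriv_test_eq_half_line:
  fixes \<phi> :: "'a::euclidean_space \<Rightarrow> complex"
  assumes \<psi>0_integral: "(\<integral>s. \<psi>0 s \<partial>lborel) = 1"
    and \<psi>0_vanishes: "\<And>s. x \<bullet> v \<le> s \<Longrightarrow> \<psi>0 s = 0"
    and line_int: "integrable lborel (\<lambda>s. \<phi> (perp_part v x + s *\<^sub>R v))"
  shows "antideriv_test v \<psi>0 \<phi> x = - (LINT r:{0<..}|lborel. \<phi> (x + r *\<^sub>R v))"
proof -
  define t u where "t = x \<bullet> v" and "u = perp_part v x"
  define L where "L = (\<lambda>A. \<integral>s. indicator A s *\<^sub>R \<phi> (u + s *\<^sub>R v) \<partial>lborel)"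
  have \<psi>0_int: "integrable lborel \<psi>0"
    using \<psi>0_integral not_integrable_integral_eq by force
  have "antideriv_test v \<psi>0 \<phi> x = (\<integral>s. indicator {..t} s *\<^sub>R \<phi> (u + s *\<^sub>R v) - xray v \<phi> u * \<psi>0 s \<partial>lborel)"
    unfolding antideriv_test_def set_lebesgue_integral_def t_def u_def
    by (intro Bochner_Integration.integral_cong refl)
       (use \<psi>0_vanishes in \<open>auto simp: indicator_def\<close>)
  also have "\<dots> = L {..t} - xray v \<phi> u"
    unfolding L_def using \<psi>0_integral
    by (subst Bochner_Integration.integral_diff) (auto intro!: integrable_mult_indicator line_int \<psi>0_int
        simp: u_def)
  also have "xray v \<phi> u = L {..t} + L {t<..}"
  proof -
    have "integrable lborel (\<lambda>s. indicator A s *\<^sub>R \<phi> (u + s *\<^sub>R v))" if "A \<in> sets lborel" for A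
      using that line_int unfolding u_def by (rule integrable_mult_indicator)
    then have "L {..t} + L {t<..}
        = (\<integral>s. indicator {..t} s *\<^sub>R \<phi> (u + s *\<^sub>R v) + indicator {t<..} s *\<^sub>R \<phi> (u + s *\<^sub>R v) \<partial>lborel)"
      unfolding L_def by (intro Bochner_Integration.integral_add[symmetric]) auto
    also have "\<dots> = xray v \<phi> u"
      unfolding xray_def by (intro Bochner_Integration.integral_cong) (auto simp: indicator_def)
    finally show ?thesis ..
  qed
  also have "L {t<..} = (LINT r:{0<..}|lborel. \<phi> (x + r *\<^sub>R v))"
    unfolding L_def set_lebesgue_integral_def
    using lborel_integral_real_affine[of 1 "\<lambda>s. indicator {t<..} s *\<^sub>R \<phi> (u + s *\<^sub>R v)" t]
    by (simp add: u_def t_def perp_part_def indicator_def algebra_simps)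
  finally show ?thesis
    by simp
qed

lemma pointwise_antideriv_eq_half_line:
  fixes f :: "'a::euclidean_space \<Rightarrow> complex"
  assumes [measurable]: "f \<in> borel_measurable borel"
  shows "pointwise_antideriv v f y = (LINT r:{0<..}|lborel. f (y - r *\<^sub>R v))"
proof -
  have "pointwise_antideriv v f y = (\<integral>r. indicator {0..} r *\<^sub>R f (y - r *\<^sub>R v) \<partial>lborel)"
    unfolding pointwise_antideriv_def set_lebesgue_integral_def
    using lborel_integral_real_affine[of "-1" "\<lambda>t. indicator {..y \<bullet> v} t *\<^sub>R f (perp_part v y + t *\<^sub>R v)"
        "y \<bullet> v"]
    by (simp add: perp_part_def indicator_def algebra_simps)
  also have "\<dots> = (\<integral>r. indicator {0<..} r *\<^sub>R f (y - r *\<^sub>R v) \<partial>lborel)"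
    using AE_lborel_singleton[of 0]
    by (intro integral_cong_AE) (measurable, auto elim!: eventually_mono simp: indicator_def)
  finally show ?thesis
    unfolding set_lebesgue_integral_def .
qed

lemma borel_measurable_antideriv_test:
  assumes [measurable]: "\<phi> \<in> borel_measurable borel" "\<psi>0 \<in> borel_measurable borel"
  shows "antideriv_test v \<psi>0 \<phi> \<in> borel_measurable borel"
proof -
  have [measurable]: "Measurable.pred (borel \<Otimes>\<^sub>M borel) (\<lambda>p. snd p \<in> {..fst p \<bullet> v})"
    unfolding atMost_iff by measurable
  have [measurable]: "(\<lambda>x. xray v \<phi> (x - (x \<bullet> v) *\<^sub>R v)) \<in> borel_measurable borel"
    unfolding xray_def by (rule lborel.borel_measurable_lebesgue_integral) measurable
  show ?thesis
    unfolding antideriv_test_def set_lebesgue_integral_def perp_part_def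
    by measurable
qed

lemma antideriv_test_eq_half_line_on_esssupp:
  fixes \<phi> :: "'a::euclidean_space \<Rightarrow> complex"
  assumes adm: "admissible_cutoff v f \<psi>0" and "x \<in> esssupp f"
    and "integrable lborel (\<lambda>s. \<phi> (perp_part v x + s *\<^sub>R v))"
  shows "antideriv_test v \<psi>0 \<phi> x = - (LINT r:{0<..}|lborel. \<phi> (x + r *\<^sub>R v))"
proof (rule antideriv_test_eq_half_line)
  have "tmin v f \<le> ereal (x \<bullet> v)"
    using \<open>x \<in> esssupp f\<close> unfolding tmin_def by (rule INF_lower)
  then show "\<psi>0 s = 0" if "x \<bullet> v \<le> s" for s
    using that by (intro admissible_cutoff_vanishes[OF adm]) (simp add: order_trans)
qed (use assms admissible_cutoff_integral in auto)

lemma borel_measurable_set_integral_along_line: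
  fixes \<phi> :: "'a::euclidean_space \<Rightarrow> 'b::{banach,second_countable_topology}"
  assumes [measurable]: "\<phi> \<in> borel_measurable borel" "A \<in> sets borel"
  shows "(\<lambda>x. LINT r:A|lborel. \<phi> (x + r *\<^sub>R v)) \<in> borel_measurable borel"
  unfolding set_lebesgue_integral_def by (rule lborel.borel_measurable_lebesgue_integral) measurable

theorem proposition1p3:
  fixes v :: "'a::euclidean_space" and f :: "'a \<Rightarrow> complex"
  assumes "norm v = 1"
    and "integrable lborel f"
    and "tmin v f > -\<infinity>"
    and "admissible_cutoff v f \<psi>0"
    and "schwartz \<phi>"
  shows "dist_antideriv v \<psi>0 (fun_pairing f) \<phi>
           = (LINT x|lborel. pointwise_antideriv v f x * \<phi> x)"
proof -
  obtain B where B: "0 \<le> B" "\<And>x. norm (\<phi> x) \<le> B / (1 + (norm x)\<^sup>2)"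
    using schwartz_decay[OF assms(5)] by blast
  have f_meas [measurable]: "f \<in> borel_measurable borel"
    using assms(2) by (rule borel_measurable_lborel_integrable)
  have \<phi>_meas [measurable]: "\<phi> \<in> borel_measurable borel"
    using schwartz_continuous[OF assms(5)] by (rule borel_measurable_continuous_onI)
  have [measurable]: "\<psi>0 \<in> borel_measurable borel"
    using admissible_cutoff_continuous[OF assms(4)] by (rule borel_measurable_continuous_onI)
  have [measurable]: "antideriv_test v \<psi>0 \<phi> \<in> borel_measurable borel"
    by (rule borel_measurable_antideriv_test) measurable
  note line_int = integrable_along_line[OF assms(1) \<phi>_meas B]
  have "AE x in lborel. - (f x * antideriv_test v \<psi>0 \<phi> x) = f x * (LINT r:{0<..}|lborel. \<phi> (x + r *\<^sub>R v))"
    using AE_nonzero_in_esssupp[of f]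
    by eventually_elim (auto simp: antideriv_test_eq_half_line_on_esssupp[OF assms(4) _ line_int])
  then have "dist_antideriv v \<psi>0 (fun_pairing f) \<phi>
      = (LINT x|lborel. f x * (LINT r:{0<..}|lborel. \<phi> (x + r *\<^sub>R v)))"
    unfolding dist_antideriv_def fun_pairing_def integral_minus[symmetric]
    by (intro integral_cong_AE) (measurable, rule borel_measurable_set_integral_along_line, auto)
  also have "\<dots> = (LINT y|lborel. (LINT r:{0<..}|lborel. f (y - r *\<^sub>R v)) * \<phi> y)"
    using half_line_integral_adjoint[OF assms(2) \<phi>_meas norm_le_decay_const[OF assms(1) \<phi>_meas B]
        line_int integral_norm_along_line_le[OF assms(1) \<phi>_meas B]] .
  also have "\<dots> = (LINT y|lborel. pointwise_antideriv v f y * \<phi> y)"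
    by (simp add: pointwise_antideriv_eq_half_line[OF f_meas])
  finally show ?thesis .
qed

end
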